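(* For every order-embedding $\sigma\colon O\to O'$ between abstract posets and all causal markings $c,c'$ such that $O\rhd c$ and $O\rhd c'$ are P-markings, we have $O\rhd c\sim_{AC}O\rhd c'$ if and only if $O'\rhd\downarrow_{O'}(c\sigma)\sim_{AC}O'\rhd\downarrow_{O'}(c'\sigma)$.
   Context: Fix a set $Act$ of action labels, an infinite set $\mathcal{E}$ of event names, and a net $N=(S,T,F,l)$ (disjoint places $S$ and transitions $T$, $F\subseteq(S\times T)\cup(T\times S)$, $l\colon T\to Act$, ${}^\bullet t=\{s:(s,t)\in F\}$, $t^\bullet=\{s:(t,s)\in F\}$ nonempty). Posets are finite $Act$-labelled posets $O=(X_O,\preccurlyeq_O,l_O)$ with $X_O\subseteq\mathcal{E}$; $|O|=\{(x,l_O(x))\}$, $x_a=(x,a)$. Morphisms preserve order and labels ($\sigma(x_a)=\sigma(x)_a$); order-embeddings additionally reflect order; isomorphisms are bijective morphisms with morphism inverse. For $K\subseteq|O|$: $\max_O K$ its maximal elements; down-closed if $y\in K,x\preccurlyeq_O y\Rightarrow x\in K$; $\downarrow_O K=\{y\in|O|:\exists x\in K,\ y\preccurlyeq_O x\}$. Causal markings: finite sets $c$ of pairs $K\vdash s$ ($s\in S$, $K$ finite $\subseteq\mathcal{E}\times Act$); $\mathcal{K}(c)$ union of cause sets, $|c|$ set of places, $K\vdash m=\{K\vdash s:s\in m\}$, $c\sigma=\{\sigma(K)\vdash s\}$, $\downarrow_O c=\{\downarrow_O K\vdash s\}$. P-marking $O\rhd c$: all cause sets are down-closed subsets of $|O|$.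 $\delta(O,K,e_a)$: $O$ plus event $e\notin X_O$ labelled $a$ above all of $K$, reflexive-transitively closed. CG$_C$: $O\rhd c\cup c'\xrightarrow{K\vdash e_a}\delta(O,K,e_a)\rhd(\mathcal{K}(c)\cup\{e_a\}\vdash t^\bullet)\cup c'$ whenever $t\in T$, $O\rhd c\cup c'$ a P-marking, $|c|={}^\bullet t$, $a=l(t)$, $e\in\mathcal{E}\setminus X_O$, $K=\max_O\mathcal{K}(c)$. Fix canonical representatives $[O]_\cong$ of isomorphism classes of posets and isomorphisms $\alpha_O\colon O\to[O]_\cong$; $O$ is abstract if $[O]_\cong=O$. For abstract $O$: $\delta(O,K,a)=[\delta(O,K,e_a)]_\cong$, $new(O,K,a)$ its added event, $old(O,K,a)\colon O\to\delta(O,K,a)$ the embedding corresponding to the inclusion. CG$_{AC}$: for each CG$_C$ transition $O\rhd c\xrightarrow{K\vdash e_a}\delta(O,K,e_a)\rhd c'$, a transition $[O]_\cong\rhd c\alpha_O\stackrel{\alpha_O(K)\vdash a}{\Longrightarrow}\delta([O]_\cong,\alpha_O(K),a)\rhd c''$ where $c''$ is $c'$ renamed by $x\mapsto old([O]_\cong,\alpha_O(K),a)(\alpha_O(x))$ for $x\in X_O$ and $e_a\mapsto new([O]_\cong,\alpha_O(K),a)$. An abstract causal bisimulation is a family $\{R_O\}$ indexed by abstract posets of relations on P-markings with abstract posets such that: $(O_1\rhd c_1,O_2\rhd c_2)\in R_O$ implies $O_1=O_2=O$; and if $(O\rhd c_1,O\rhd c_2)\in R_O$ and $O\rhd c_1\stackrel{K\vdash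 a}{\Longrightarrow}O'\rhd c_1'$ then $O\rhd c_2\stackrel{K\vdash a}{\Longrightarrow}O'\rhd c_2'$ with $(O'\rhd c_1',O'\rhd c_2')\in R_{O'}$, and vice versa. $\sim_{AC}$ is the greatest one. *)

theory Defs
  imports Main
begin

text \<open>A net N = (S,T,F,l). Places and transitions have disjoint types 's and 't;
  the flow relation F is split into its S x T part and its T x S part.\<close>
record ('s, 't, 'a) net =
  places :: "'s set"
  transitions :: "'t set"
  flow_in  :: "('s \<times> 't) set"
  flow_out :: "('t \<times> 's) set"
  lab :: "'t \<Rightarrow> 'a"

definition preset :: "('s, 't, 'a) net \<Rightarrow> 't \<Rightarrow> 's set" where
  "preset N t = {s. (s, t) \<in> flow_in N}"

definition postset :: "('s, 't, 'a) net \<Rightarrow> 't \<Rightarrow> 's set" where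
  "postset N t = {s. (t, s) \<in> flow_out N}"

definition is_net :: "('s, 't, 'a) net \<Rightarrow> bool" where
  "is_net N \<longleftrightarrow> flow_in N \<subseteq> places N \<times> transitions N \<and> flow_out N \<subseteq> transitions N \<times> places N
     \<and> (\<forall>t\<in>transitions N. preset N t \<noteq> {} \<and> postset N t \<noteq> {})"

text \<open>A poset over event names 'e with labels 'a: a partial labelling map whose domain is
  the event set X_O, together with the order relation.\<close>
type_synonym ('e, 'a) poset = "('e \<Rightarrow> 'a option) \<times> ('e \<times> 'e) set"

definition evs :: "('e, 'a) poset \<Rightarrow> 'e set" where
  "evs P = dom (fst P)"

definition leq :: "('e, 'a) poset \<Rightarrow> 'e \<Rightarrow> 'e \<Rightarrow> bool" where
  "leq P x y \<longleftrightarrow> (x, y) \<in> snd P"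

definition elems :: "('e, 'a) poset \<Rightarrow> ('e \<times> 'a) set" where
  "elems P = {(x, a). fst P x = Some a}"

definition is_poset :: "('e, 'a) poset \<Rightarrow> bool" where
  "is_poset P \<longleftrightarrow> finite (evs P) \<and> snd P \<subseteq> evs P \<times> evs P \<and> refl_on (evs P) (snd P)
     \<and> antisym (snd P) \<and> trans (snd P)"

definition morphism :: "('e \<Rightarrow> 'e) \<Rightarrow> ('e, 'a) poset \<Rightarrow> ('e, 'a) poset \<Rightarrow> bool" where
  "morphism \<sigma> P Q \<longleftrightarrow>
     (\<forall>x\<in>evs P. \<sigma> x \<in> evs Q \<and> fst Q (\<sigma> x) = fst P x)
     \<and> (\<forall>x\<in>evs P. \<forall>y\<in>evs P. leq P x y \<longrightarrow> leq Q (\<sigma> x) (\<sigma> y))"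

definition order_embedding :: "('e \<Rightarrow> 'e) \<Rightarrow> ('e, 'a) poset \<Rightarrow> ('e, 'a) poset \<Rightarrow> bool" where
  "order_embedding \<sigma> P Q \<longleftrightarrow> morphism \<sigma> P Q
     \<and> (\<forall>x\<in>evs P. \<forall>y\<in>evs P. leq Q (\<sigma> x) (\<sigma> y) \<longrightarrow> leq P x y)"

definition poset_iso :: "('e \<Rightarrow> 'e) \<Rightarrow> ('e, 'a) poset \<Rightarrow> ('e, 'a) poset \<Rightarrow> bool" where
  "poset_iso \<sigma> P Q \<longleftrightarrow> morphism \<sigma> P Q \<and>
     (\<exists>\<tau>. morphism \<tau> Q P \<and> (\<forall>x\<in>evs P. \<tau> (\<sigma> x) = x) \<and> (\<forall>y\<in>evs Q. \<sigma> (\<tau> y) = y))"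

definition isomorphic :: "('e, 'a) poset \<Rightarrow> ('e, 'a) poset \<Rightarrow> bool" where
  "isomorphic P Q \<longleftrightarrow> (\<exists>\<sigma>. poset_iso \<sigma> P Q)"

definition leqE :: "('e, 'a) poset \<Rightarrow> ('e \<times> 'a) \<Rightarrow> ('e \<times> 'a) \<Rightarrow> bool" where
  "leqE P p q \<longleftrightarrow> leq P (fst p) (fst q)"

definition maxel :: "('e, 'a) poset \<Rightarrow> ('e \<times> 'a) set \<Rightarrow> ('e \<times> 'a) set" where
  "maxel P K = {x \<in> K. \<not> (\<exists>y\<in>K. y \<noteq> x \<and> leqE P x y)}"

definition down_closed :: "('e, 'a) poset \<Rightarrow> ('e \<times> 'a) set \<Rightarrow> bool" where
  "down_closed P K \<longleftrightarrow> (\<forall>y\<in>K. \<forall>x\<in>elems P. leqE P x y \<longrightarrow> x \<in> K)"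

definition downset :: "('e, 'a) poset \<Rightarrow> ('e \<times> 'a) set \<Rightarrow> ('e \<times> 'a) set" where
  "downset P K = {y \<in> elems P. \<exists>x\<in>K. leqE P y x}"

definition rename :: "('e \<Rightarrow> 'e) \<Rightarrow> ('e \<times> 'a) set \<Rightarrow> ('e \<times> 'a) set" where
  "rename \<sigma> K = (\<lambda>(x, a). (\<sigma> x, a)) ` K"

text \<open>A causal marking is a finite set of pairs (K, s), written K |- s.\<close>
type_synonym ('e, 'a, 's) cmarking = "(('e \<times> 'a) set \<times> 's) set"

definition causal_marking :: "('s, 't, 'a) net \<Rightarrow> ('e, 'a, 's) cmarking \<Rightarrow> bool" where
  "causal_marking N c \<longleftrightarrow> finite c \<and> (\<forall>(K, s)\<in>c. s \<in> places N \<and> finite K)"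

definition causes :: "('e, 'a, 's) cmarking \<Rightarrow> ('e \<times> 'a) set" where
  "causes c = \<Union> (fst ` c)"

definition marking_places :: "('e, 'a, 's) cmarking \<Rightarrow> 's set" where
  "marking_places c = snd ` c"

definition rename_m :: "('e \<Rightarrow> 'e) \<Rightarrow> ('e, 'a, 's) cmarking \<Rightarrow> ('e, 'a, 's) cmarking" where
  "rename_m \<sigma> c = (\<lambda>(K, s). (rename \<sigma> K, s)) ` c"

definition down_m :: "('e, 'a) poset \<Rightarrow> ('e, 'a, 's) cmarking \<Rightarrow> ('e, 'a, 's) cmarking" where
  "down_m P c = (\<lambda>(K, s). (downset P K, s)) ` c"

definition pmarking :: "('s, 't, 'a) net \<Rightarrow> ('e, 'a) poset \<Rightarrow> ('e, 'a, 's) cmarking \<Rightarrow> bool" where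
  "pmarking N P c \<longleftrightarrow> is_poset P \<and> causal_marking N c
     \<and> (\<forall>(K, s)\<in>c. K \<subseteq> elems P \<and> down_closed P K)"

definition delta :: "('e, 'a) poset \<Rightarrow> ('e \<times> 'a) set \<Rightarrow> 'e \<Rightarrow> 'a \<Rightarrow> ('e, 'a) poset" where
  "delta P K e a = ((fst P)(e \<mapsto> a),
     (snd P \<union> {(x, e) | x. x \<in> fst ` K})\<^sup>+ \<union> {(e, e)})"

definition cgc :: "('s, 't, 'a) net \<Rightarrow> ('e, 'a) poset \<Rightarrow> ('e, 'a, 's) cmarking
    \<Rightarrow> ('e \<times> 'a) set \<Rightarrow> 'e \<Rightarrow> 'a \<Rightarrow> ('e, 'a) poset \<Rightarrow> ('e, 'a, 's) cmarking \<Rightarrow> bool" where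
  "cgc N P d K e a Q d' \<longleftrightarrow>
     (\<exists>t c c'. t \<in> transitions N \<and> d = c \<union> c' \<and> pmarking N P (c \<union> c')
        \<and> marking_places c = preset N t \<and> a = lab N t \<and> e \<notin> evs P
        \<and> K = maxel P (causes c) \<and> Q = delta P K e a
        \<and> d' = ((\<lambda>s. (insert (e, a) (causes c), s)) ` postset N t) \<union> c')"

definition valid_canon :: "(('e, 'a) poset \<Rightarrow> ('e, 'a) poset) \<Rightarrow> (('e, 'a) poset \<Rightarrow> 'e \<Rightarrow> 'e) \<Rightarrow> bool" where
  "valid_canon canon alpha \<longleftrightarrow>
     (\<forall>P. is_poset P \<longrightarrow> is_poset (canon P) \<and> poset_iso (alpha P) P (canon P)
        \<and> (\<forall>Q. is_poset Q \<and> isomorphic P Q \<longrightarrow> canon Q = canon P))"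

definition abstract :: "(('e, 'a) poset \<Rightarrow> ('e, 'a) poset) \<Rightarrow> ('e, 'a) poset \<Rightarrow> bool" where
  "abstract canon P \<longleftrightarrow> is_poset P \<and> canon P = P"

text \<open>A fixed choice of fresh event used to define delta, new and old on abstract posets.\<close>
definition fresh :: "('e, 'a) poset \<Rightarrow> 'e" where
  "fresh P = (SOME e. e \<notin> evs P)"

definition deltaA :: "(('e, 'a) poset \<Rightarrow> ('e, 'a) poset) \<Rightarrow> ('e, 'a) poset \<Rightarrow> ('e \<times> 'a) set \<Rightarrow> 'a
    \<Rightarrow> ('e, 'a) poset" where
  "deltaA canon P K a = canon (delta P K (fresh P) a)"

definition newA :: "(('e, 'a) poset \<Rightarrow> 'e \<Rightarrow> 'e) \<Rightarrow> ('e, 'a) poset \<Rightarrow> ('e \<times> 'a) set \<Rightarrow> 'a \<Rightarrow> 'e" where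
  "newA alpha P K a = alpha (delta P K (fresh P) a) (fresh P)"

definition oldA :: "(('e, 'a) poset \<Rightarrow> 'e \<Rightarrow> 'e) \<Rightarrow> ('e, 'a) poset \<Rightarrow> ('e \<times> 'a) set \<Rightarrow> 'a \<Rightarrow> 'e \<Rightarrow> 'e" where
  "oldA alpha P K a = alpha (delta P K (fresh P) a)"

definition cgac :: "('s, 't, 'a) net \<Rightarrow> (('e, 'a) poset \<Rightarrow> ('e, 'a) poset) \<Rightarrow> (('e, 'a) poset \<Rightarrow> 'e \<Rightarrow> 'e)
    \<Rightarrow> ('e, 'a) poset \<Rightarrow> ('e, 'a, 's) cmarking \<Rightarrow> ('e \<times> 'a) set \<Rightarrow> 'a
    \<Rightarrow> ('e, 'a) poset \<Rightarrow> ('e, 'a, 's) cmarking \<Rightarrow> bool" where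
  "cgac N canon alpha P d K a Q d'' \<longleftrightarrow>
     (\<exists>P0 d0 K0 e P1 d1. cgc N P0 d0 K0 e a P1 d1
        \<and> P = canon P0 \<and> d = rename_m (alpha P0) d0 \<and> K = rename (alpha P0) K0
        \<and> Q = deltaA canon P K a
        \<and> d'' = rename_m (\<lambda>x. if x = e then newA alpha P K a else oldA alpha P K a (alpha P0 x)) d1)"

definition abs_causal_bisim :: "('s, 't, 'a) net \<Rightarrow> (('e, 'a) poset \<Rightarrow> ('e, 'a) poset)
    \<Rightarrow> (('e, 'a) poset \<Rightarrow> 'e \<Rightarrow> 'e)
    \<Rightarrow> (('e, 'a) poset \<Rightarrow> ('e, 'a, 's) cmarking \<Rightarrow> ('e, 'a, 's) cmarking \<Rightarrow> bool) \<Rightarrow> bool" where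
  "abs_causal_bisim N canon alpha R \<longleftrightarrow>
     (\<forall>P c1 c2. R P c1 c2 \<longrightarrow>
        abstract canon P \<and> pmarking N P c1 \<and> pmarking N P c2
        \<and> (\<forall>K a Q c1'. cgac N canon alpha P c1 K a Q c1' \<longrightarrow>
             (\<exists>c2'. cgac N canon alpha P c2 K a Q c2' \<and> R Q c1' c2'))
        \<and> (\<forall>K a Q c2'. cgac N canon alpha P c2 K a Q c2' \<longrightarrow>
             (\<exists>c1'. cgac N canon alpha P c1 K a Q c1' \<and> R Q c1' c2')))"

definition sim_AC :: "('s, 't, 'a) net \<Rightarrow> (('e, 'a) poset \<Rightarrow> ('e, 'a) poset)
    \<Rightarrow> (('e, 'a) poset \<Rightarrow> 'e \<Rightarrow> 'e)
    \<Rightarrow> ('e, 'a) poset \<Rightarrow> ('e, 'a, 's) cmarking \<Rightarrow> ('e, 'a, 's) cmarking \<Rightarrow> bool" where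
  "sim_AC N canon alpha P c1 c2 \<longleftrightarrow> (\<exists>R. abs_causal_bisim N canon alpha R \<and> R P c1 c2)"

end

theory Submission
  imports Defs
begin

text \<open>Both implications are proved coinductively. Pushing a causal marking forward along an
  order-embedding \<open>\<sigma> : P \<rightarrow> Q\<close>, i.e. replacing each cause set \<open>K\<close> by \<open>\<down>\<^sub>Q \<sigma>(K)\<close>, commutes
  with firing: a CG\<open>\<^sub>C\<close> transition of \<open>P \<rhd> c\<close> maps to a transition of \<open>Q \<rhd> \<down>(c\<sigma>)\<close>, the new event
  being sent to the new event, and every transition of \<open>Q \<rhd> \<down>(c\<sigma>)\<close> arises in this way because
  \<open>\<down>\<^sub>Q \<sigma>(-)\<close> is injective on down-closed sets and commutes with taking maximal elements.
  Composing with the canonical isomorphisms transfers this to CG\<open>\<^sub>A\<^sub>C\<close>, with the extended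
  embedding again an order-embedding between the abstract targets. Hence the pushforwards of
  bisimilar markings, and the markings whose pushforwards along some embedding are bisimilar,
  both form abstract causal bisimulations.\<close>

lemma elems_iff: "(x, a) \<in> elems P \<longleftrightarrow> fst P x = Some a"
  by (simp add: elems_def)

lemma elems_evs: "(x, a) \<in> elems P \<Longrightarrow> x \<in> evs P"
  by (auto simp: evs_def elems_def)

lemma fst_elems_evs: "p \<in> elems P \<Longrightarrow> fst p \<in> evs P"
  by (cases p) (simp add: elems_evs)

lemma elems_unique_label: "(x, a) \<in> elems P \<Longrightarrow> (x, b) \<in> elems P \<Longrightarrow> a = b"
  by (simp add: elems_def)

lemma fst_in_evs: "K \<subseteq> elems P \<Longrightarrow> k \<in> fst ` K \<Longrightarrow> k \<in> evs P"
  by (auto dest: elems_evs)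

lemma leq_evs: "is_poset P \<Longrightarrow> leq P x y \<Longrightarrow> x \<in> evs P \<and> y \<in> evs P"
  by (auto simp: is_poset_def leq_def)

lemma leq_refl: "is_poset P \<Longrightarrow> x \<in> evs P \<Longrightarrow> leq P x x"
  by (auto simp: is_poset_def leq_def refl_on_def)

lemma leq_antisym: "is_poset P \<Longrightarrow> leq P x y \<Longrightarrow> leq P y x \<Longrightarrow> x = y"
  by (auto simp: is_poset_def leq_def antisym_def)

lemma leq_trans: "is_poset P \<Longrightarrow> leq P x y \<Longrightarrow> leq P y z \<Longrightarrow> leq P x z"
  by (auto simp: is_poset_def leq_def trans_def)

lemma finite_elems: "is_poset P \<Longrightarrow> finite (elems P)"
proof -
  assume "is_poset P"
  then have "finite (evs P)" by (simp add: is_poset_def)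
  moreover have "elems P = (\<lambda>x. (x, the (fst P x))) ` evs P"
    by (force simp: elems_def evs_def)
  ultimately show ?thesis by simp
qed

lemma fresh_notin_evs:
  assumes "infinite (UNIV :: 'e set)" and "is_poset (P :: ('e, 'a) poset)"
  shows "fresh P \<notin> evs P"
proof -
  have "finite (evs P)" using assms(2) by (simp add: is_poset_def)
  then obtain x where "x \<notin> evs P" using ex_new_if_finite[OF assms(1)] by blast
  then show ?thesis unfolding fresh_def by (rule someI)
qed

lemma morphism_evs: "morphism \<sigma> P Q \<Longrightarrow> x \<in> evs P \<Longrightarrow> \<sigma> x \<in> evs Q"
  by (simp add: morphism_def)

lemma morphism_label: "morphism \<sigma> P Q \<Longrightarrow> x \<in> evs P \<Longrightarrow> fst Q (\<sigma> x) = fst P x"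
  by (simp add: morphism_def)

lemma morphism_elems: "morphism \<sigma> P Q \<Longrightarrow> (x, a) \<in> elems P \<Longrightarrow> (\<sigma> x, a) \<in> elems Q"
  by (metis elems_evs elems_iff morphism_label)

lemma morphism_leq:
  "morphism \<sigma> P Q \<Longrightarrow> x \<in> evs P \<Longrightarrow> y \<in> evs P \<Longrightarrow> leq P x y \<Longrightarrow> leq Q (\<sigma> x) (\<sigma> y)"
  by (simp add: morphism_def)

lemma morphism_comp: "morphism \<sigma> P Q \<Longrightarrow> morphism \<tau> Q R \<Longrightarrow> morphism (\<tau> \<circ> \<sigma>) P R"
  unfolding morphism_def by auto

lemma order_embedding_morphism: "order_embedding \<sigma> P Q \<Longrightarrow> morphism \<sigma> P Q"
  by (simp add: order_embedding_def)

lemma order_embedding_leq_iff: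
  "order_embedding \<sigma> P Q \<Longrightarrow> x \<in> evs P \<Longrightarrow> y \<in> evs P \<Longrightarrow> leq Q (\<sigma> x) (\<sigma> y) \<longleftrightarrow> leq P x y"
  by (auto simp: order_embedding_def morphism_def)

lemma order_embedding_inj_on:
  assumes P: "is_poset P" and Q: "is_poset Q" and e: "order_embedding \<sigma> P Q"
  shows "inj_on \<sigma> (evs P)"
proof (rule inj_onI)
  fix x y assume x: "x \<in> evs P" and y: "y \<in> evs P" and eq: "\<sigma> x = \<sigma> y"
  have "leq Q (\<sigma> x) (\<sigma> y)" "leq Q (\<sigma> y) (\<sigma> x)"
    using leq_refl[OF Q morphism_evs[OF order_embedding_morphism[OF e] x]] eq by auto
  then have "leq P x y" "leq P y x" using order_embedding_leq_iff[OF e] x y by auto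
  then show "x = y" using leq_antisym[OF P] by blast
qed

lemma order_embedding_comp:
  "order_embedding \<sigma> P Q \<Longrightarrow> order_embedding \<tau> Q R \<Longrightarrow> order_embedding (\<tau> \<circ> \<sigma>) P R"
  unfolding order_embedding_def by (metis comp_apply morphism_comp morphism_evs)

lemma poset_iso_order_embedding:
  assumes "poset_iso \<beta> P Q"
  shows "order_embedding \<beta> P Q"
proof -
  obtain \<tau> where m: "morphism \<beta> P Q" and t: "morphism \<tau> Q P" and inv: "\<forall>x\<in>evs P. \<tau> (\<beta> x) = x"
    using assms unfolding poset_iso_def by blast
  have "leq P x y" if "x \<in> evs P" "y \<in> evs P" "leq Q (\<beta> x) (\<beta> y)" for x y
    using morphism_leq[OF t morphism_evs[OF m] morphism_evs[OF m]] inv that by metis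
  then show ?thesis using m by (simp add: order_embedding_def)
qed

lemma poset_iso_surj: "poset_iso \<beta> P Q \<Longrightarrow> \<forall>y\<in>evs Q. \<exists>x\<in>evs P. \<beta> x = y"
  unfolding poset_iso_def using morphism_evs by metis

lemma poset_iso_inverse:
  "poset_iso \<beta> P Q \<Longrightarrow> \<exists>\<gamma>. poset_iso \<gamma> Q P \<and> (\<forall>x\<in>evs P. \<gamma> (\<beta> x) = x) \<and> (\<forall>y\<in>evs Q. \<beta> (\<gamma> y) = y)"
  unfolding poset_iso_def by blast

lemma rename_elems: "morphism \<sigma> P Q \<Longrightarrow> K \<subseteq> elems P \<Longrightarrow> rename \<sigma> K \<subseteq> elems Q"
  unfolding rename_def using morphism_elems by fastforce

lemma rename_cong: "\<forall>x\<in>evs P. f x = g x \<Longrightarrow> K \<subseteq> elems P \<Longrightarrow> rename f K = rename g K"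
  unfolding rename_def by (rule image_cong) (auto dest: elems_evs)

lemma rename_comp: "rename f (rename g K) = rename (f \<circ> g) K"
  unfolding rename_def image_image by (auto simp: split_def)

lemma rename_ident: "rename (\<lambda>x. x) K = K"
  unfolding rename_def by (auto simp: split_def)

lemma rename_insert: "rename \<sigma> (insert (x, a) K) = insert (\<sigma> x, a) (rename \<sigma> K)"
  unfolding rename_def by simp

lemma rename_Union: "rename \<sigma> (\<Union>A) = \<Union>(rename \<sigma> ` A)"
  unfolding rename_def by blast

lemma rename_mono: "A \<subseteq> B \<Longrightarrow> rename \<sigma> A \<subseteq> rename \<sigma> B"
  unfolding rename_def by blast

lemma fst_rename: "fst ` rename \<sigma> K = \<sigma> ` fst ` K"
  unfolding rename_def by force

lemma inj_on_rename:
  assumes "is_poset P" "is_poset Q" "order_embedding \<sigma> P Q"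
  shows "inj_on (\<lambda>(x, a). (\<sigma> x, a)) (elems P)"
  using order_embedding_inj_on[OF assms] unfolding inj_on_def by (auto dest: elems_evs)

lemma rename_inject:
  assumes "is_poset P" "is_poset Q" "order_embedding \<sigma> P Q"
    and "K1 \<subseteq> elems P" "K2 \<subseteq> elems P" "rename \<sigma> K1 = rename \<sigma> K2"
  shows "K1 = K2"
  using inj_on_rename[OF assms(1-3)] assms(4-6) unfolding rename_def
  by (simp add: inj_on_image_eq_iff)

lemma downset_iff: "y \<in> downset Q S \<longleftrightarrow> y \<in> elems Q \<and> (\<exists>x\<in>S. leq Q (fst y) (fst x))"
  unfolding downset_def leqE_def by blast

lemma downset_subset_elems: "downset Q S \<subseteq> elems Q"
  unfolding downset_def by blast

lemma subset_downset: "is_poset Q \<Longrightarrow> S \<subseteq> elems Q \<Longrightarrow> S \<subseteq> downset Q S"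
  unfolding downset_def leqE_def by (force intro: leq_refl dest: elems_evs)

lemma down_closed_downset: "is_poset Q \<Longrightarrow> down_closed Q (downset Q S)"
  unfolding down_closed_def downset_def leqE_def by (blast intro: leq_trans)

lemma downset_Union: "downset Q (\<Union>A) = \<Union>(downset Q ` A)"
  unfolding downset_def by blast

lemma downset_Un: "downset Q (A \<union> B) = downset Q A \<union> downset Q B"
  unfolding downset_def by blast

lemma downset_mono: "A \<subseteq> B \<Longrightarrow> downset Q A \<subseteq> downset Q B"
  unfolding downset_def by blast

lemma finite_downset: "is_poset Q \<Longrightarrow> finite (downset Q S)"
  by (rule finite_subset[OF downset_subset_elems finite_elems])

lemma downset_rename_iff:
  assumes Q: "is_poset Q" and e: "order_embedding \<sigma> P Q"
    and K: "K \<subseteq> elems P" "down_closed P K" and x: "(x, a) \<in> elems P"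
  shows "(\<sigma> x, a) \<in> downset Q (rename \<sigma> K) \<longleftrightarrow> (x, a) \<in> K"
proof
  assume "(\<sigma> x, a) \<in> downset Q (rename \<sigma> K)"
  then obtain y b where yb: "(y, b) \<in> K" "leq Q (\<sigma> x) (\<sigma> y)"
    unfolding downset_iff rename_def by auto
  then have "leq P x y"
    using order_embedding_leq_iff[OF e elems_evs[OF x] elems_evs[OF subsetD[OF K(1)]]] by blast
  then show "(x, a) \<in> K" using K(2) yb(1) x unfolding down_closed_def leqE_def by fastforce
next
  assume "(x, a) \<in> K"
  then have "(\<sigma> x, a) \<in> rename \<sigma> K" unfolding rename_def by force
  then show "(\<sigma> x, a) \<in> downset Q (rename \<sigma> K)"
    using subset_downset[OF Q rename_elems[OF order_embedding_morphism[OF e] K(1)]] by blast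
qed

lemma downset_rename_inject:
  assumes Q: "is_poset Q" and e: "order_embedding \<sigma> P Q"
    and K1: "K1 \<subseteq> elems P" "down_closed P K1" and K2: "K2 \<subseteq> elems P" "down_closed P K2"
    and eq: "downset Q (rename \<sigma> K1) = downset Q (rename \<sigma> K2)"
  shows "K1 = K2"
proof -
  have "z \<in> K1 \<longleftrightarrow> z \<in> K2" if "z \<in> elems P" for z
    using downset_rename_iff[OF Q e K1] downset_rename_iff[OF Q e K2] eq that
    by (cases z) simp
  then show ?thesis using K1(1) K2(1) by blast
qed

lemma downset_rename_surj:
  assumes Q: "is_poset Q" and e: "order_embedding \<sigma> P Q"
    and s: "\<forall>y\<in>evs Q. \<exists>x\<in>evs P. \<sigma> x = y" and K: "K \<subseteq> elems P" "down_closed P K"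
  shows "downset Q (rename \<sigma> K) = rename \<sigma> K"
proof (rule equalityI)
  show "downset Q (rename \<sigma> K) \<subseteq> rename \<sigma> K"
  proof
    fix z assume z: "z \<in> downset Q (rename \<sigma> K)"
    obtain y b where zy: "z = (y, b)" by fastforce
    then have yb: "(y, b) \<in> elems Q" using z downset_subset_elems by blast
    then obtain x where x: "x \<in> evs P" "\<sigma> x = y" using s elems_evs by metis
    then have "(x, b) \<in> elems P"
      using yb morphism_label[OF order_embedding_morphism[OF e] x(1)] by (simp add: elems_iff)
    moreover have "(\<sigma> x, b) \<in> downset Q (rename \<sigma> K)" using z zy x(2) by simp
    ultimately have "(x, b) \<in> K" using downset_rename_iff[OF Q e K] by blast
    then show "z \<in> rename \<sigma> K" using zy x unfolding rename_def by force
  qed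
  show "rename \<sigma> K \<subseteq> downset Q (rename \<sigma> K)"
    using subset_downset[OF Q rename_elems[OF order_embedding_morphism[OF e] K(1)]] .
qed

lemma downset_rename_downset:
  assumes Q: "is_poset Q" and R: "is_poset R" and t: "morphism \<tau> Q R" and S: "S \<subseteq> elems Q"
  shows "downset R (rename \<tau> (downset Q S)) = downset R (rename \<tau> S)"
proof
  show "downset R (rename \<tau> (downset Q S)) \<subseteq> downset R (rename \<tau> S)"
  proof
    fix z assume "z \<in> downset R (rename \<tau> (downset Q S))"
    then obtain v where z: "z \<in> elems R" and v: "v \<in> rename \<tau> (downset Q S)" "leq R (fst z) (fst v)"
      unfolding downset_iff by blast
    obtain w where w: "w \<in> downset Q S" "leq R (fst z) (\<tau> (fst w))"
      using v unfolding rename_def by (auto simp: case_prod_beta)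
    obtain x where x: "x \<in> S" "leq Q (fst w) (fst x)" using w(1) unfolding downset_iff by blast
    obtain y b where y: "w = (y, b)" "(y, b) \<in> elems Q"
      using w(1) downset_subset_elems by (metis prod.collapse subsetD)
    have "leq R (\<tau> y) (\<tau> (fst x))"
      using morphism_leq[OF t elems_evs[OF y(2)] _] x(2) y(1) subsetD[OF S x(1)] elems_evs[of "fst x" "snd x" Q]
      by simp
    then have "leq R (fst z) (\<tau> (fst x))" using w(2) y(1) leq_trans[OF R] by auto
    moreover have "(\<tau> (fst x), snd x) \<in> rename \<tau> S" using x(1) unfolding rename_def by force
    ultimately show "z \<in> downset R (rename \<tau> S)" using z(1) unfolding downset_iff by force
  qed
  show "downset R (rename \<tau> S) \<subseteq> downset R (rename \<tau> (downset Q S))"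
    by (intro downset_mono rename_mono subset_downset[OF Q S])
qed

lemma maxel_subset: "maxel P K \<subseteq> K"
  unfolding maxel_def by blast

lemma maxel_downset:
  assumes Q: "is_poset Q" and S: "S \<subseteq> elems Q"
  shows "maxel Q (downset Q S) = maxel Q S"
proof -
  have sup: "S \<subseteq> downset Q S" using subset_downset[OF Q S] .
  have "\<not> leqE Q x y" if x: "x \<in> maxel Q S" and y: "y \<in> downset Q S" "y \<noteq> x" for x y
  proof
    assume xy: "leqE Q x y"
    obtain s where s: "s \<in> S" "leq Q (fst y) (fst s)" using y(1) unfolding downset_iff by auto
    have "leq Q (fst x) (fst s)" using leq_trans[OF Q] xy s(2) by (simp add: leqE_def)
    then have "s = x" using x s(1) unfolding maxel_def leqE_def by blast
    then have "fst y = fst x" using leq_antisym[OF Q] xy s(2) by (simp add: leqE_def)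
    moreover have "y \<in> elems Q" "x \<in> elems Q"
      using y(1) downset_subset_elems S x maxel_subset by blast+
    ultimately show False using y(2) elems_unique_label by (metis prod.collapse)
  qed
  moreover have "x \<in> S" if "x \<in> maxel Q (downset Q S)" for x
  proof -
    have "x \<in> downset Q S" using that maxel_subset by blast
    then obtain s where s: "s \<in> S" "leq Q (fst x) (fst s)" unfolding downset_iff by blast
    then have "s = x" using that sup unfolding maxel_def leqE_def by blast
    then show ?thesis using s(1) by simp
  qed
  ultimately show ?thesis using sup unfolding maxel_def by blast
qed

lemma maxel_rename:
  assumes P: "is_poset P" and Q: "is_poset Q" and e: "order_embedding \<sigma> P Q" and S: "S \<subseteq> elems P"
  shows "maxel Q (rename \<sigma> S) = rename \<sigma> (maxel P S)"
proof -
  let ?f = "\<lambda>(x, a). (\<sigma> x, a)"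
  have le: "leqE Q (?f u) (?f v) \<longleftrightarrow> leqE P u v" if "u \<in> S" "v \<in> S" for u v
    using order_embedding_leq_iff[OF e] subsetD[OF S that(1)] subsetD[OF S that(2)]
      elems_evs[of "fst u" "snd u" P] elems_evs[of "fst v" "snd v" P]
    by (simp add: leqE_def split_def)
  have "?f u = ?f v \<longleftrightarrow> u = v" if "u \<in> S" "v \<in> S" for u v
    using inj_on_rename[OF P Q e] S that unfolding inj_on_def by blast
  with le show ?thesis unfolding rename_def maxel_def by blast
qed

section \<open>Pushing markings forward\<close>

definition down_closed_marking :: "('e, 'a) poset \<Rightarrow> ('e, 'a, 's) cmarking \<Rightarrow> bool" where
  "down_closed_marking P d \<longleftrightarrow> (\<forall>(K, s)\<in>d. K \<subseteq> elems P \<and> down_closed P K)"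

definition push_token :: "('e \<Rightarrow> 'e) \<Rightarrow> ('e, 'a) poset \<Rightarrow> ('e \<times> 'a) set \<times> 's \<Rightarrow> ('e \<times> 'a) set \<times> 's" where
  "push_token \<sigma> Q = (\<lambda>(K, s). (downset Q (rename \<sigma> K), s))"

lemma push_token_apply [simp]: "push_token \<sigma> Q (K, s) = (downset Q (rename \<sigma> K), s)"
  by (simp add: push_token_def)

lemma down_m_rename_m: "down_m Q (rename_m \<sigma> d) = push_token \<sigma> Q ` d"
  unfolding down_m_def rename_m_def push_token_def image_image by (simp add: split_def)

lemma down_closed_markingD:
  "down_closed_marking P d \<Longrightarrow> (K, s) \<in> d \<Longrightarrow> K \<subseteq> elems P \<and> down_closed P K"
  unfolding down_closed_marking_def by blast

lemma down_closed_marking_Un: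
  "down_closed_marking P (c \<union> c') \<longleftrightarrow> down_closed_marking P c \<and> down_closed_marking P c'"
  unfolding down_closed_marking_def by blast

lemma pmarking_iff:
  "pmarking N P d \<longleftrightarrow> is_poset P \<and> causal_marking N d \<and> down_closed_marking P d"
  unfolding pmarking_def down_closed_marking_def by (rule refl)

lemma pmarking_down_closed_marking: "pmarking N P d \<Longrightarrow> down_closed_marking P d"
  by (simp add: pmarking_iff)

lemma causes_subset_elems: "down_closed_marking P c \<Longrightarrow> causes c \<subseteq> elems P"
  unfolding down_closed_marking_def causes_def by fastforce

lemma down_closed_marking_push: "is_poset Q \<Longrightarrow> down_closed_marking Q (push_token \<sigma> Q ` c)"
  unfolding down_closed_marking_def push_token_def
  using downset_subset_elems[of Q] down_closed_downset[of Q] by auto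

lemma causes_push: "causes (push_token \<sigma> Q ` c) = downset Q (rename \<sigma> (causes c))"
proof -
  have "fst ` push_token \<sigma> Q ` c = (\<lambda>K. downset Q (rename \<sigma> K)) ` fst ` c"
    unfolding image_image by (auto simp: push_token_def split_def)
  then show ?thesis unfolding causes_def rename_Union downset_Union image_image by simp
qed

lemma marking_places_push: "marking_places (push_token \<sigma> Q ` c) = marking_places c"
  unfolding marking_places_def image_image by (auto simp: push_token_def split_def)

lemma pmarking_push:
  assumes "pmarking N P c" "is_poset Q"
  shows "pmarking N Q (push_token \<sigma> Q ` c)"
proof -
  have "finite c" and "s \<in> places N" if "(K, s) \<in> c" for K s
    using assms(1) that unfolding pmarking_def causal_marking_def by blast+
  then have "causal_marking N (push_token \<sigma> Q ` c)"
    using assms(1) finite_downset[OF assms(2)]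
    unfolding causal_marking_def pmarking_def by auto
  then show ?thesis by (simp add: pmarking_iff assms(2) down_closed_marking_push)
qed

text \<open>Finiteness of \<open>d\<close> is recovered from that of its injective image.\<close>
lemma pmarking_reflect:
  assumes P: "is_poset P" and Q: "is_poset Q" and e: "order_embedding \<sigma> P Q"
    and d: "down_closed_marking P d" and pm: "pmarking N Q (push_token \<sigma> Q ` d)"
  shows "pmarking N P d"
proof -
  have "inj_on (push_token \<sigma> Q) d"
  proof (rule inj_onI)
    fix k1 k2 assume k: "k1 \<in> d" "k2 \<in> d" "push_token \<sigma> Q k1 = push_token \<sigma> Q k2"
    obtain K1 s1 K2 s2 where k12: "k1 = (K1, s1)" "k2 = (K2, s2)" by (cases k1, cases k2)
    then have "K1 \<subseteq> elems P" "down_closed P K1" "K2 \<subseteq> elems P" "down_closed P K2"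
      using down_closed_markingD[OF d] k by auto
    then show "k1 = k2" using downset_rename_inject[OF Q e] k k12 by auto
  qed
  moreover have "finite (push_token \<sigma> Q ` d)"
    using pm unfolding pmarking_def causal_marking_def by blast
  ultimately have "finite d" by (metis finite_imageD)
  moreover have "s \<in> places N" if "(K, s) \<in> d" for K s
    using pm that unfolding pmarking_def causal_marking_def by force
  moreover have "finite K" if "(K, s) \<in> d" for K s
    using finite_subset[OF _ finite_elems[OF P]] down_closed_markingD[OF d that] by blast
  ultimately show ?thesis using P d by (auto simp: pmarking_iff causal_marking_def)
qed

lemma push_comp:
  assumes Q: "is_poset Q" and R: "is_poset R" and t: "morphism \<tau> Q R" and s: "morphism \<sigma> P Q"
    and d: "down_closed_marking P d"
  shows "push_token \<tau> R ` push_token \<sigma> Q ` d = push_token (\<tau> \<circ> \<sigma>) R ` d"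
  unfolding image_image
proof (rule image_cong[OF refl])
  fix k assume "k \<in> d"
  moreover obtain K s where k: "k = (K, s)" by fastforce
  ultimately have "K \<subseteq> elems P" using down_closed_markingD[OF d] by blast
  then show "push_token \<tau> R (push_token \<sigma> Q k) = push_token (\<tau> \<circ> \<sigma>) R k"
    using downset_rename_downset[OF Q R t rename_elems[OF s]] k by (simp add: rename_comp)
qed

lemma push_cong:
  assumes "\<forall>x\<in>evs P. f x = g x" and "down_closed_marking P d"
  shows "push_token f Q ` d = push_token g Q ` d"
proof (rule image_cong[OF refl])
  fix k assume "k \<in> d"
  moreover obtain K s where k: "k = (K, s)" by fastforce
  ultimately have "K \<subseteq> elems P" using down_closed_markingD[OF assms(2)] by blast
  then show "push_token f Q k = push_token g Q k" using rename_cong[OF assms(1)] k by simp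
qed

lemma push_eq_rename_m:
  assumes Q: "is_poset Q" and e: "order_embedding \<sigma> P Q"
    and s: "\<forall>y\<in>evs Q. \<exists>x\<in>evs P. \<sigma> x = y" and d: "down_closed_marking P d"
  shows "push_token \<sigma> Q ` d = rename_m \<sigma> d"
  unfolding rename_m_def
proof (rule image_cong[OF refl])
  fix k assume "k \<in> d"
  moreover obtain K s where k: "k = (K, s)" by fastforce
  ultimately have "K \<subseteq> elems P" "down_closed P K" using down_closed_markingD[OF d] by blast+
  then show "push_token \<sigma> Q k = (case k of (K, s) \<Rightarrow> (rename \<sigma> K, s))"
    using downset_rename_surj[OF Q e s] k by simp
qed

lemma push_ident:
  assumes "is_poset P" and "down_closed_marking P d"
  shows "push_token (\<lambda>x. x) P ` d = d"
proof -
  have "order_embedding (\<lambda>x. x) P P" by (simp add: order_embedding_def morphism_def)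
  then show ?thesis
    using push_eq_rename_m[OF assms(1) _ _ assms(2)]
    by (simp add: rename_m_def rename_ident split_def)
qed

lemma rename_m_comp: "rename_m f (rename_m g d) = rename_m (f \<circ> g) d"
  unfolding rename_m_def image_image by (auto simp: split_def rename_comp)

lemma rename_m_cong:
  assumes "\<forall>x\<in>evs P. f x = g x" and "down_closed_marking P d"
  shows "rename_m f d = rename_m g d"
  unfolding rename_m_def
proof (rule image_cong[OF refl])
  fix k assume "k \<in> d"
  moreover obtain K s where k: "k = (K, s)" by fastforce
  ultimately have "K \<subseteq> elems P" using down_closed_markingD[OF assms(2)] by blast
  then show "(case k of (K, s) \<Rightarrow> (rename f K, s)) = (case k of (K, s) \<Rightarrow> (rename g K, s))"
    using rename_cong[OF assms(1)] k by simp
qed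

lemma rename_m_ident: "rename_m (\<lambda>x. x) d = d"
  unfolding rename_m_def by (simp add: rename_ident split_def)

section \<open>Adding an event to a poset\<close>

lemma fst_delta: "fst (delta P K e a) = (fst P)(e \<mapsto> a)"
  by (simp add: delta_def)

lemma evs_delta: "evs (delta P K e a) = insert e (evs P)"
  by (simp add: evs_def delta_def)

lemma elems_delta: "e \<notin> evs P \<Longrightarrow> elems (delta P K e a) = insert (e, a) (elems P)"
  unfolding elems_def delta_def evs_def by (auto split: if_splits)

lemma leq_delta:
  assumes P: "is_poset P" and eP: "e \<notin> evs P" and K: "K \<subseteq> elems P"
  shows "leq (delta P K e a) x y \<longleftrightarrow> leq P x y \<or> (y = e \<and> (x = e \<or> (\<exists>k\<in>fst ` K. leq P x k)))"
proof -
  let ?R = "snd P \<union> {(x, e) | x. x \<in> fst ` K}"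
  let ?T = "snd P \<union> {(x, e) | x. \<exists>k\<in>fst ` K. (x, k) \<in> snd P}"
  have no_e: "(e, z) \<notin> snd P" "(z, e) \<notin> snd P" for z
    using P eP by (auto simp: is_poset_def)
  have RT: "?R \<subseteq> ?T"
    using leq_refl[OF P fst_in_evs[OF K]] by (auto simp: leq_def)
  have trans: "trans ?T"
    using no_e leq_trans[OF P] unfolding trans_def leq_def by blast
  have TR: "?T \<subseteq> ?R\<^sup>+"
  proof
    fix p assume "p \<in> ?T"
    then consider "p \<in> snd P" | x k where "p = (x, e)" "k \<in> fst ` K" "(x, k) \<in> snd P"
      by blast
    then show "p \<in> ?R\<^sup>+"
    proof cases
      case (2 x k)
      then have "(x, k) \<in> ?R" "(k, e) \<in> ?R" by blast+
      then show ?thesis using 2(1) by (meson r_into_trancl trancl_into_trancl)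
    qed (blast intro: r_into_trancl')
  qed
  have "?R\<^sup>+ \<subseteq> ?T"
    using trancl_mono[OF _ RT] trancl_id[OF trans] by blast
  then have "?R\<^sup>+ = ?T" using TR by (rule subset_antisym)
  then have "snd (delta P K e a) = ?T \<union> {(e, e)}" by (simp add: delta_def)
  then show ?thesis unfolding leq_def by auto
qed

lemma is_poset_delta:
  assumes P: "is_poset P" and eP: "e \<notin> evs P" and K: "K \<subseteq> elems P"
  shows "is_poset (delta P K e a)"
proof -
  let ?D = "delta P K e a"
  note L = leq_delta[OF P eP K, of a]
  have no_e: "\<not> leq P e z" "\<not> leq P z e" for z using leq_evs[OF P] eP by blast+
  have "finite (evs ?D)" using P by (simp add: evs_delta is_poset_def)
  moreover have "snd ?D \<subseteq> evs ?D \<times> evs ?D"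
    using L leq_evs[OF P] by (auto simp: evs_delta leq_def[symmetric])
  moreover have "refl_on (evs ?D) (snd ?D)"
    using calculation(2) L leq_refl[OF P] by (auto simp: refl_on_def evs_delta leq_def[symmetric])
  moreover have "antisym (snd ?D)"
    using L no_e leq_antisym[OF P] unfolding antisym_def leq_def[symmetric] by metis
  moreover have "trans (snd ?D)"
    using L no_e leq_trans[OF P] unfolding trans_def leq_def[symmetric] by metis
  ultimately show ?thesis by (simp add: is_poset_def)
qed

lemma downset_delta_old:
  assumes P: "is_poset P" and eP: "e \<notin> evs P" and K: "K \<subseteq> elems P" and S: "S \<subseteq> elems P"
  shows "downset (delta P K e a) S = downset P S"
proof -
  have le: "leq (delta P K e a) u v \<longleftrightarrow> leq P u v" if "v \<in> evs P" for u v
    using leq_delta[OF P eP K] that eP by auto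
  have el: "y \<in> elems (delta P K e a) \<longleftrightarrow> y \<in> elems P" if "fst y \<in> evs P" for y
    using elems_delta[OF eP] that eP by auto
  have S_evs: "fst x \<in> evs P" if "x \<in> S" for x
    using fst_elems_evs subsetD[OF S that] .
  show ?thesis
  proof (rule set_eqI)
    fix y
    show "y \<in> downset (delta P K e a) S \<longleftrightarrow> y \<in> downset P S"
      unfolding downset_iff using le el S_evs leq_evs[OF P] by blast
  qed
qed

lemma downset_delta_new:
  assumes P: "is_poset P" and eP: "e \<notin> evs P" and K: "K \<subseteq> elems P"
  shows "downset (delta P K e a) {(e, a)} = insert (e, a) (downset P K)"
proof (rule set_eqI)
  fix y :: "'a \<times> 'b"
  have "y \<in> downset (delta P K e a) {(e, a)} \<longleftrightarrow>
      y \<in> elems (delta P K e a) \<and> (fst y = e \<or> (\<exists>k\<in>K. leq P (fst y) (fst k)))"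
    using leq_delta[OF P eP K] leq_evs[OF P] eP unfolding downset_iff by auto
  moreover have "y \<in> elems (delta P K e a) \<and> fst y = e \<longleftrightarrow> y = (e, a)"
    using elems_delta[OF eP] elems_evs[of e _ P] eP by (cases y) auto
  moreover have "y \<in> elems (delta P K e a) \<longleftrightarrow> y \<in> elems P" if "leq P (fst y) z" for z
    using elems_delta[OF eP] leq_evs[OF P that] eP by auto
  moreover have "fst y \<noteq> e" if "y \<in> elems P"
    using fst_elems_evs[OF that] eP by blast
  ultimately show "y \<in> downset (delta P K e a) {(e, a)} \<longleftrightarrow> y \<in> insert (e, a) (downset P K)"
    unfolding insert_iff downset_iff by blast
qed

lemma order_embedding_delta:
  assumes P: "is_poset P" and Q: "is_poset Q" and em: "order_embedding \<sigma> P Q"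
    and eP: "e \<notin> evs P" and eQ: "e' \<notin> evs Q" and K: "K \<subseteq> elems P"
  shows "order_embedding (\<sigma>(e := e')) (delta P K e a) (delta Q (rename \<sigma> K) e' a)"
proof -
  let ?s = "\<sigma>(e := e')" and ?DP = "delta P K e a" and ?DQ = "delta Q (rename \<sigma> K) e' a"
  have m: "morphism \<sigma> P Q" using order_embedding_morphism[OF em] .
  note LP = leq_delta[OF P eP K, of a]
  note LQ = leq_delta[OF Q eQ rename_elems[OF m K], of a]
  have \<sigma>_evs: "\<sigma> x \<in> evs Q" "\<sigma> x \<noteq> e'" if "x \<in> evs P" for x
    using morphism_evs[OF m that] eQ by auto
  have no_new: "\<not> leq P e z" "\<not> leq P z e" "\<not> leq Q e' z" "\<not> leq Q z e'" for z
    using leq_evs[OF P] leq_evs[OF Q] eP eQ by blast+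
  have below_K: "(\<exists>k\<in>fst ` rename \<sigma> K. leq Q (\<sigma> x) k) \<longleftrightarrow> (\<exists>k\<in>fst ` K. leq P x k)"
    if "x \<in> evs P" for x
    using order_embedding_leq_iff[OF em that fst_in_evs[OF K]] by (auto simp: fst_rename)
  have "leq ?DQ (?s x) (?s y) \<longleftrightarrow> leq ?DP x y" if "x \<in> evs ?DP" "y \<in> evs ?DP" for x y
  proof (cases "x = e"; cases "y = e")
    assume "x \<noteq> e" "y \<noteq> e"
    then show ?thesis
      using that LP LQ \<sigma>_evs order_embedding_leq_iff[OF em] by (simp add: evs_delta)
  next
    assume "x \<noteq> e" "y = e"
    then show ?thesis
      using that LP LQ \<sigma>_evs below_K no_new by (simp add: evs_delta)
  qed (use LP LQ \<sigma>_evs no_new that in \<open>auto simp: evs_delta\<close>)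
  moreover have "?s x \<in> evs ?DQ \<and> fst ?DQ (?s x) = fst ?DP x" if "x \<in> evs ?DP" for x
    using that \<sigma>_evs morphism_label[OF m] eP by (auto simp: evs_delta fst_delta)
  ultimately show ?thesis unfolding order_embedding_def morphism_def by blast
qed

lemma surj_on_delta:
  assumes "\<forall>y\<in>evs Q. \<exists>x\<in>evs P. \<sigma> x = y" and "e \<notin> evs P"
  shows "\<forall>y\<in>evs (delta Q K' e' a). \<exists>x\<in>evs (delta P K e a). (\<sigma>(e := e')) x = y"
  using assms by (auto simp: evs_delta)

section \<open>Transitions of the causal graph\<close>

text \<open>The successor marking \<open>(\<K>(c) \<union> {e\<^sub>a} \<turnstile> A) \<union> c'\<close> of the CG\<open>\<^sub>C\<close> rule.\<close>
definition fire :: "'e \<Rightarrow> 'a \<Rightarrow> ('e, 'a, 's) cmarking \<Rightarrow> 's set \<Rightarrow> ('e, 'a, 's) cmarking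
    \<Rightarrow> ('e, 'a, 's) cmarking" where
  "fire e a c A c' = (\<lambda>s. (insert (e, a) (causes c), s)) ` A \<union> c'"

lemma cgc_iff:
  "cgc N P d K e a T d1 \<longleftrightarrow>
     (\<exists>t c c'. t \<in> transitions N \<and> d = c \<union> c' \<and> pmarking N P (c \<union> c')
        \<and> marking_places c = preset N t \<and> a = lab N t \<and> e \<notin> evs P
        \<and> K = maxel P (causes c) \<and> T = delta P K e a \<and> d1 = fire e a c (postset N t) c')"
  unfolding cgc_def fire_def by (rule refl)

lemma maxel_causes_push:
  assumes P: "is_poset P" and Q: "is_poset Q" and em: "order_embedding \<sigma> P Q"
    and c: "down_closed_marking P c"
  shows "maxel Q (causes (push_token \<sigma> Q ` c)) = rename \<sigma> (maxel P (causes c))"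
proof -
  have C: "causes c \<subseteq> elems P" using causes_subset_elems[OF c] .
  have "maxel Q (causes (push_token \<sigma> Q ` c)) = maxel Q (downset Q (rename \<sigma> (causes c)))"
    by (simp add: causes_push)
  also have "\<dots> = maxel Q (rename \<sigma> (causes c))"
    using maxel_downset[OF Q rename_elems[OF order_embedding_morphism[OF em] C]] .
  also have "\<dots> = rename \<sigma> (maxel P (causes c))" using maxel_rename[OF P Q em C] .
  finally show ?thesis .
qed

text \<open>Old cause sets keep their down-closure in the extension, and the new one becomes
  \<open>{e'\<^sub>a} \<union> \<down>\<sigma>(\<K>(c))\<close> because the maximal elements of \<open>\<K>(c)\<close> lie in \<open>\<K>(c)\<close>.\<close>
lemma push_fire:
  assumes Q: "is_poset Q" and em: "order_embedding \<sigma> P Q"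
    and eP: "e \<notin> evs P" and eQ: "e' \<notin> evs Q"
    and c: "down_closed_marking P c" and c': "down_closed_marking P c'"
  shows "push_token (\<sigma>(e := e')) (delta Q (rename \<sigma> (maxel P (causes c))) e' a) ` fire e a c A c'
    = fire e' a (push_token \<sigma> Q ` c) A (push_token \<sigma> Q ` c')"
proof -
  let ?s = "\<sigma>(e := e')"
  let ?C = "causes c"
  let ?K = "maxel P ?C"
  let ?DQ = "delta Q (rename \<sigma> ?K) e' a"
  have m: "morphism \<sigma> P Q" using order_embedding_morphism[OF em] .
  have C: "?C \<subseteq> elems P" using causes_subset_elems[OF c] .
  have K: "?K \<subseteq> elems P" using maxel_subset C by blast
  have KQ: "rename \<sigma> ?K \<subseteq> elems Q" using rename_elems[OF m K] .
  have agree: "\<forall>x\<in>evs P. ?s x = \<sigma> x" using eP by auto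
  have old: "push_token ?s ?DQ ` c' = push_token \<sigma> Q ` c'"
  proof -
    have "push_token ?s ?DQ ` c' = push_token \<sigma> ?DQ ` c'" using push_cong[OF agree c'] .
    also have "\<dots> = push_token \<sigma> Q ` c'"
    proof (rule image_cong[OF refl])
      fix k assume "k \<in> c'"
      moreover obtain K1 s where k: "k = (K1, s)" by fastforce
      ultimately have "K1 \<subseteq> elems P" using down_closed_markingD[OF c'] by blast
      then show "push_token \<sigma> ?DQ k = push_token \<sigma> Q k"
        using downset_delta_old[OF Q eQ KQ rename_elems[OF m]] k by simp
    qed
    finally show ?thesis .
  qed
  have "rename ?s ?C = rename \<sigma> ?C" by (rule rename_cong[OF agree C])
  then have "rename ?s (insert (e, a) ?C) = {(e', a)} \<union> rename \<sigma> ?C"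
    unfolding rename_insert by simp
  then have "downset ?DQ (rename ?s (insert (e, a) ?C))
      = downset ?DQ {(e', a)} \<union> downset ?DQ (rename \<sigma> ?C)"
    by (simp only: downset_Un)
  also have "\<dots> = insert (e', a) (downset Q (rename \<sigma> ?K)) \<union> downset Q (rename \<sigma> ?C)"
    using downset_delta_new[OF Q eQ KQ] downset_delta_old[OF Q eQ KQ rename_elems[OF m C]] by simp
  also have "\<dots> = insert (e', a) (downset Q (rename \<sigma> ?C))"
    using downset_mono[OF rename_mono[OF maxel_subset[of P ?C]], of Q \<sigma>] by blast
  finally have new: "downset ?DQ (rename ?s (insert (e, a) ?C))
      = insert (e', a) (causes (push_token \<sigma> Q ` c))"
    by (simp add: causes_push)
  show ?thesis using old new unfolding fire_def image_Un image_image by simp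
qed

lemma down_closed_marking_fire:
  assumes P: "is_poset P" and eP: "e \<notin> evs P"
    and c: "down_closed_marking P c" and c': "down_closed_marking P c'"
  shows "down_closed_marking (delta P (maxel P (causes c)) e a) (fire e a c A c')"
proof -
  have id: "order_embedding (\<lambda>x. x) P P" by (simp add: order_embedding_def morphism_def)
  have "maxel P (causes c) \<subseteq> elems P" using maxel_subset causes_subset_elems[OF c] by blast
  then have D: "is_poset (delta P (maxel P (causes c)) e a)" using is_poset_delta[OF P eP] by blast
  have "(\<lambda>x. x)(e := e) = (\<lambda>x. x)" by auto
  then have "push_token (\<lambda>x. x) (delta P (maxel P (causes c)) e a) ` fire e a c A c' = fire e a c A c'"
    using push_fire[OF P id eP eP c c', of a A]
    by (simp add: push_ident[OF P c] push_ident[OF P c'] rename_ident)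
  then show ?thesis using down_closed_marking_push[OF D] by metis
qed

lemma cgc_facts:
  assumes "cgc N P d K e a T d1"
  shows "is_poset P" "pmarking N P d" "K \<subseteq> elems P" "e \<notin> evs P" "T = delta P K e a"
    "is_poset T" "down_closed_marking T d1"
proof -
  obtain t c c' where H: "d = c \<union> c'" "pmarking N P (c \<union> c')" "e \<notin> evs P"
    "K = maxel P (causes c)" "T = delta P K e a" "d1 = fire e a c (postset N t) c'"
    using assms unfolding cgc_iff by blast
  then show P: "is_poset P" "pmarking N P d" "e \<notin> evs P" "T = delta P K e a"
    by (simp_all add: pmarking_iff)
  have c: "down_closed_marking P c" "down_closed_marking P c'"
    using H(2) by (simp_all add: pmarking_iff down_closed_marking_Un)
  then show K: "K \<subseteq> elems P" using H(4) maxel_subset causes_subset_elems by blast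
  show "is_poset T" using is_poset_delta[OF P(1) H(3) K] H(5) by simp
  show "down_closed_marking T d1" using down_closed_marking_fire[OF P(1) H(3) c] H(4-6) by simp
qed

lemma cgc_push:
  assumes P: "is_poset P" and Q: "is_poset Q" and em: "order_embedding \<sigma> P Q"
    and eQ: "e' \<notin> evs Q" and st: "cgc N P d K e a T d1"
  shows "cgc N Q (push_token \<sigma> Q ` d) (rename \<sigma> K) e' a (delta Q (rename \<sigma> K) e' a)
           (push_token (\<sigma>(e := e')) (delta Q (rename \<sigma> K) e' a) ` d1)"
    and "order_embedding (\<sigma>(e := e')) T (delta Q (rename \<sigma> K) e' a)"
proof -
  obtain t c c' where H: "t \<in> transitions N" "d = c \<union> c'" "pmarking N P (c \<union> c')"
    "marking_places c = preset N t" "a = lab N t" "e \<notin> evs P"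
    "K = maxel P (causes c)" "T = delta P K e a" "d1 = fire e a c (postset N t) c'"
    using st unfolding cgc_iff by blast
  have c: "down_closed_marking P c" "down_closed_marking P c'"
    using H(3) by (simp_all add: pmarking_iff down_closed_marking_Un)
  show "cgc N Q (push_token \<sigma> Q ` d) (rename \<sigma> K) e' a (delta Q (rename \<sigma> K) e' a)
           (push_token (\<sigma>(e := e')) (delta Q (rename \<sigma> K) e' a) ` d1)"
    unfolding cgc_iff
  proof (intro exI conjI)
    show "push_token \<sigma> Q ` d = push_token \<sigma> Q ` c \<union> push_token \<sigma> Q ` c'"
      using H(2) by (simp add: image_Un)
    show "pmarking N Q (push_token \<sigma> Q ` c \<union> push_token \<sigma> Q ` c')"
      using pmarking_push[OF H(3) Q] by (simp add: image_Un)
    show "marking_places (push_token \<sigma> Q ` c) = preset N t"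
      using H(4) by (simp add: marking_places_push)
    show "rename \<sigma> K = maxel Q (causes (push_token \<sigma> Q ` c))"
      using maxel_causes_push[OF P Q em c(1)] H(7) by simp
    show "push_token (\<sigma>(e := e')) (delta Q (rename \<sigma> K) e' a) ` d1
        = fire e' a (push_token \<sigma> Q ` c) (postset N t) (push_token \<sigma> Q ` c')"
      using push_fire[OF Q em H(6) eQ c] H(7,9) by simp
  qed (simp_all add: H(1,5) eQ)
  show "order_embedding (\<sigma>(e := e')) T (delta Q (rename \<sigma> K) e' a)"
    using order_embedding_delta[OF P Q em H(6) eQ] cgc_facts(3)[OF st] H(8) by simp
qed

text \<open>The consumed tokens of \<open>d\<close> are those whose images are consumed.\<close>
lemma cgc_pull:
  assumes P: "is_poset P" and Q: "is_poset Q" and em: "order_embedding \<sigma> P Q"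
    and pm: "pmarking N P d" and eP: "e \<notin> evs P"
    and st: "cgc N Q (push_token \<sigma> Q ` d) KQ e' a TQ dQ1"
  obtains K d1 where "KQ = rename \<sigma> K" and "cgc N P d K e a (delta P K e a) d1"
    and "dQ1 = push_token (\<sigma>(e := e')) (delta Q KQ e' a) ` d1"
proof -
  obtain t cQ cQ' where H: "t \<in> transitions N" "push_token \<sigma> Q ` d = cQ \<union> cQ'"
    "marking_places cQ = preset N t" "a = lab N t" "e' \<notin> evs Q"
    "KQ = maxel Q (causes cQ)" "dQ1 = fire e' a cQ (postset N t) cQ'"
    using st unfolding cgc_iff by blast
  define c where "c = {k \<in> d. push_token \<sigma> Q k \<in> cQ}"
  define c' where "c' = {k \<in> d. push_token \<sigma> Q k \<in> cQ'}"
  have dc: "d = c \<union> c'"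
    using H(2) unfolding c_def c'_def by (auto simp del: push_token_apply)
  have "cQ \<subseteq> push_token \<sigma> Q ` d" "cQ' \<subseteq> push_token \<sigma> Q ` d" using H(2) by blast+
  then have pc: "push_token \<sigma> Q ` c = cQ" "push_token \<sigma> Q ` c' = cQ'"
    unfolding c_def c'_def by (auto simp del: push_token_apply)
  have c: "down_closed_marking P c" "down_closed_marking P c'"
    using pm dc by (simp_all add: pmarking_iff down_closed_marking_Un)
  define K where "K = maxel P (causes c)"
  have KQ: "KQ = rename \<sigma> K"
    using maxel_causes_push[OF P Q em c(1)] H(6) pc(1) K_def by simp
  have "cgc N P d K e a (delta P K e a) (fire e a c (postset N t) c')"
    unfolding cgc_iff
    by (intro exI[of _ t] exI[of _ c] exI[of _ c'])
      (use H(1,3,4) pm dc eP K_def pc(1) marking_places_push[of \<sigma> Q c] in auto)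
  moreover have "dQ1 = push_token (\<sigma>(e := e')) (delta Q KQ e' a) ` fire e a c (postset N t) c'"
    using push_fire[OF Q em eP H(5) c] H(7) pc KQ K_def by simp
  ultimately show ?thesis using that KQ by blast
qed

section \<open>Canonical representatives\<close>

lemma valid_canon_iso: "valid_canon canon alpha \<Longrightarrow> is_poset X \<Longrightarrow> poset_iso (alpha X) X (canon X)"
  unfolding valid_canon_def by blast

lemma valid_canon_is_poset: "valid_canon canon alpha \<Longrightarrow> is_poset X \<Longrightarrow> is_poset (canon X)"
  unfolding valid_canon_def by blast

lemma abstract_canon:
  assumes vc: "valid_canon canon alpha" and X: "is_poset X"
  shows "abstract canon (canon X)"
proof -
  have "isomorphic X (canon X)"
    unfolding isomorphic_def using valid_canon_iso[OF vc X] by blast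
  then have "canon (canon X) = canon X"
    using vc X valid_canon_is_poset[OF vc X] unfolding valid_canon_def by blast
  then show ?thesis using valid_canon_is_poset[OF vc X] by (simp add: abstract_def)
qed

lemma abstract_is_poset: "abstract canon P \<Longrightarrow> is_poset P"
  by (simp add: abstract_def)

lemma cgc_rename_onto:
  assumes P0: "is_poset P0" and P: "is_poset P" and em: "order_embedding \<beta> P0 P"
    and onto: "\<forall>y\<in>evs P. \<exists>x\<in>evs P0. \<beta> x = y" and eP: "e' \<notin> evs P"
    and st: "cgc N P0 d K e a T d1"
  shows "cgc N P (rename_m \<beta> d) (rename \<beta> K) e' a (delta P (rename \<beta> K) e' a)
           (rename_m (\<beta>(e := e')) d1)"
proof -
  let ?D = "delta P (rename \<beta> K) e' a"
  note F = cgc_facts[OF st]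
  have D: "is_poset ?D"
    using is_poset_delta[OF P eP rename_elems[OF order_embedding_morphism[OF em] F(3)]] .
  have "push_token \<beta> P ` d = rename_m \<beta> d"
    using push_eq_rename_m[OF P em onto pmarking_down_closed_marking[OF F(2)]] .
  moreover have "push_token (\<beta>(e := e')) ?D ` d1 = rename_m (\<beta>(e := e')) d1"
    using push_eq_rename_m[OF D cgc_push(2)[OF P0 P em eP st] _ F(7)] surj_on_delta[OF onto F(4)] F(5)
    by simp
  ultimately show ?thesis using cgc_push(1)[OF P0 P em eP st] by simp
qed

lemma cgac_imp_cgc:
  assumes vc: "valid_canon canon alpha" and inf: "infinite (UNIV :: 'e set)"
    and ab: "abstract canon (P :: ('e, 'a) poset)" and tr: "cgac N canon alpha P d K a T d''"
  obtains d1 where "cgc N P d K (fresh P) a (delta P K (fresh P) a) d1"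
    and "T = canon (delta P K (fresh P) a)" and "d'' = rename_m (alpha (delta P K (fresh P) a)) d1"
proof -
  let ?f = "fresh P" and ?D = "delta P K (fresh P) a"
  have P: "is_poset P" using ab by (simp add: abstract_def)
  have fP: "?f \<notin> evs P" using fresh_notin_evs[OF inf P] .
  obtain P0 d0 K0 e P1 d1 where st: "cgc N P0 d0 K0 e a P1 d1"
    and h: "P = canon P0" "d = rename_m (alpha P0) d0" "K = rename (alpha P0) K0"
      "T = deltaA canon P K a"
      "d'' = rename_m (\<lambda>x. if x = e then newA alpha P K a else oldA alpha P K a (alpha P0 x)) d1"
    using tr unfolding cgac_def by blast
  let ?\<beta> = "alpha P0"
  note F = cgc_facts[OF st]
  have iso: "poset_iso ?\<beta> P0 P" using valid_canon_iso[OF vc F(1)] h(1) by simp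
  have "cgc N P d K ?f a ?D (rename_m (?\<beta>(e := ?f)) d1)"
    using cgc_rename_onto[OF F(1) P poset_iso_order_embedding[OF iso] poset_iso_surj[OF iso] fP st]
      h(2,3) by simp
  moreover have "\<forall>x\<in>evs P1. (if x = e then newA alpha P K a else oldA alpha P K a (?\<beta> x))
      = (alpha ?D \<circ> ?\<beta>(e := ?f)) x"
    by (simp add: newA_def oldA_def)
  then have "d'' = rename_m (alpha ?D) (rename_m (?\<beta>(e := ?f)) d1)"
    unfolding h(5) rename_m_comp by (rule rename_m_cong[OF _ F(7)])
  moreover have "T = canon ?D" using h(4) by (simp add: deltaA_def)
  ultimately show ?thesis using that by blast
qed

lemma cgc_imp_cgac:
  assumes vc: "valid_canon canon alpha" and inf: "infinite (UNIV :: 'e set)"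
    and ab: "abstract canon (P :: ('e, 'a) poset)"
    and st: "cgc N P d K (fresh P) a (delta P K (fresh P) a) d1"
  shows "cgac N canon alpha P d K a (canon (delta P K (fresh P) a)) (rename_m (alpha (delta P K (fresh P) a)) d1)"
proof -
  let ?f = "fresh P" and ?D = "delta P K (fresh P) a"
  have P: "is_poset P" and cP: "canon P = P" using ab by (simp_all add: abstract_def)
  have fP: "?f \<notin> evs P" using fresh_notin_evs[OF inf P] .
  note F = cgc_facts[OF st]
  text \<open>Since \<open>P\<close> is abstract, \<open>alpha P\<close> is an automorphism of \<open>P\<close>; the witness transition is
    taken from the copy of \<open>P \<rhd> d\<close> renamed by its inverse \<open>\<gamma>\<close>.\<close>
  have "poset_iso (alpha P) P P" using valid_canon_iso[OF vc P] cP by simp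
  then obtain \<gamma> where iso: "poset_iso \<gamma> P P" and inv: "\<forall>y\<in>evs P. alpha P (\<gamma> y) = y"
    using poset_iso_inverse by blast
  let ?g = "\<gamma>(?f := ?f)"
  let ?f' = "\<lambda>x. if x = ?f then newA alpha P K a else oldA alpha P K a (alpha P x)"
  have st': "cgc N P (rename_m \<gamma> d) (rename \<gamma> K) ?f a (delta P (rename \<gamma> K) ?f a)
      (rename_m ?g d1)"
    using cgc_rename_onto[OF P P poset_iso_order_embedding[OF iso] poset_iso_surj[OF iso] fP st] .
  have "rename_m (alpha P \<circ> \<gamma>) d = rename_m (\<lambda>x. x) d"
    by (rule rename_m_cong[OF _ pmarking_down_closed_marking[OF F(2)]]) (simp add: inv)
  then have dd: "d = rename_m (alpha P) (rename_m \<gamma> d)" by (simp add: rename_m_comp rename_m_ident)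
  have KK: "K = rename (alpha P) (rename \<gamma> K)"
    using rename_cong[OF _ F(3), of "alpha P \<circ> \<gamma>" "\<lambda>x. x"] inv
    by (simp add: rename_comp rename_ident)
  have "\<gamma> x \<noteq> ?f" if "x \<in> evs P" for x
    using morphism_evs[OF poset_iso_order_embedding[OF iso, THEN order_embedding_morphism] that] fP
    by auto
  then have "\<forall>x\<in>evs ?D. (?f' \<circ> ?g) x = alpha ?D x"
    using inv by (auto simp: evs_delta newA_def oldA_def)
  then have dd'': "rename_m (alpha ?D) d1 = rename_m ?f' (rename_m ?g d1)"
    using rename_m_cong[OF _ F(7)] by (simp add: rename_m_comp)
  have TT: "canon ?D = deltaA canon P K a" by (simp add: deltaA_def)
  show ?thesis
    unfolding cgac_def
    by (intro exI conjI, rule st') (fact cP[symmetric] dd KK TT dd'')+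
qed

lemma cgac_iff_cgc:
  assumes vc: "valid_canon canon alpha" and inf: "infinite (UNIV :: 'e set)"
    and ab: "abstract canon (P :: ('e, 'a) poset)"
  shows "cgac N canon alpha P d K a T d'' \<longleftrightarrow>
    (\<exists>d1. cgc N P d K (fresh P) a (delta P K (fresh P) a) d1 \<and> T = canon (delta P K (fresh P) a)
        \<and> d'' = rename_m (alpha (delta P K (fresh P) a)) d1)"
  using cgac_imp_cgc[OF vc inf ab] cgc_imp_cgac[OF vc inf ab] by metis

section \<open>Abstract causal bisimulations\<close>

lemma sim_AC_pmarking:
  "sim_AC N canon alpha P c1 c2 \<Longrightarrow> abstract canon P \<and> pmarking N P c1 \<and> pmarking N P c2"
  unfolding sim_AC_def abs_causal_bisim_def by blast

lemma sim_AC_step: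
  "sim_AC N canon alpha P c1 c2 \<Longrightarrow> cgac N canon alpha P c1 K a T c1' \<Longrightarrow>
   \<exists>c2'. cgac N canon alpha P c2 K a T c2' \<and> sim_AC N canon alpha T c1' c2'"
  unfolding sim_AC_def abs_causal_bisim_def by blast

lemma sim_AC_coinduct:
  "abs_causal_bisim N canon alpha R \<Longrightarrow> R P c1 c2 \<Longrightarrow> sim_AC N canon alpha P c1 c2"
  unfolding sim_AC_def by blast

lemma sim_AC_sym:
  assumes "sim_AC N canon alpha P c1 c2"
  shows "sim_AC N canon alpha P c2 c1"
proof -
  obtain R where "abs_causal_bisim N canon alpha R" "R P c1 c2"
    using assms unfolding sim_AC_def by blast
  moreover have "abs_causal_bisim N canon alpha (\<lambda>P x y. R P y x)"
    using calculation(1) unfolding abs_causal_bisim_def by blast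
  ultimately show ?thesis unfolding sim_AC_def by blast
qed

lemma abs_causal_bisim_symI:
  assumes sym: "\<And>P x y. R P x y \<Longrightarrow> R P y x"
    and wf: "\<And>P x y. R P x y \<Longrightarrow> abstract canon P \<and> pmarking N P x \<and> pmarking N P y"
    and step: "\<And>P x y K a T x'. R P x y \<Longrightarrow> cgac N canon alpha P x K a T x' \<Longrightarrow>
      \<exists>y'. cgac N canon alpha P y K a T y' \<and> R T x' y'"
  shows "abs_causal_bisim N canon alpha R"
  unfolding abs_causal_bisim_def
proof (intro allI impI conjI)
  fix P x y K a T y'
  assume "R P x y" and "cgac N canon alpha P y K a T y'"
  then obtain x' where "cgac N canon alpha P x K a T x'" "R T y' x'" using step sym by blast
  then show "\<exists>x'. cgac N canon alpha P x K a T x' \<and> R T x' y'" using sym by blast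
qed (use wf step in blast)+

lemma rename_m_canon:
  assumes vc: "valid_canon canon alpha" and X: "is_poset X" and d: "down_closed_marking X d"
  shows "rename_m (alpha X) d = push_token (alpha X) (canon X) ` d"
  using push_eq_rename_m[OF valid_canon_is_poset[OF vc X]
      poset_iso_order_embedding[OF valid_canon_iso[OF vc X]] poset_iso_surj[OF valid_canon_iso[OF vc X]] d]
  by simp

lemma canon_transport:
  assumes vc: "valid_canon canon alpha" and X: "is_poset X" and Y: "is_poset Y"
    and em: "order_embedding \<sigma> X Y"
  obtains \<tau> where "order_embedding \<tau> (canon X) (canon Y)"
    and "\<And>d. down_closed_marking X d \<Longrightarrow>
      push_token \<tau> (canon Y) ` rename_m (alpha X) d = rename_m (alpha Y) (push_token \<sigma> Y ` d)"
proof -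
  let ?aX = "alpha X" and ?aY = "alpha Y"
  have isoX: "poset_iso ?aX X (canon X)" and isoY: "poset_iso ?aY Y (canon Y)"
    using valid_canon_iso vc X Y by blast+
  have CX: "is_poset (canon X)" and CY: "is_poset (canon Y)"
    using valid_canon_is_poset vc X Y by blast+
  have mX: "morphism ?aX X (canon X)" and mY: "morphism ?aY Y (canon Y)"
    using isoX isoY by (simp_all add: poset_iso_def)
  obtain \<gamma> where iso\<gamma>: "poset_iso \<gamma> (canon X) X" and inv: "\<forall>x\<in>evs X. \<gamma> (?aX x) = x"
    using poset_iso_inverse[OF isoX] by blast
  define \<tau> where "\<tau> = ?aY \<circ> (\<sigma> \<circ> \<gamma>)"
  have et: "order_embedding \<tau> (canon X) (canon Y)"
    unfolding \<tau>_def
    using order_embedding_comp[OF order_embedding_comp[OF poset_iso_order_embedding[OF iso\<gamma>] em]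
        poset_iso_order_embedding[OF isoY]] .
  have "push_token \<tau> (canon Y) ` rename_m ?aX d = rename_m ?aY (push_token \<sigma> Y ` d)"
    if d: "down_closed_marking X d" for d
  proof -
    have "push_token \<tau> (canon Y) ` rename_m ?aX d = push_token (\<tau> \<circ> ?aX) (canon Y) ` d"
      using rename_m_canon[OF vc X d] push_comp[OF CX CY order_embedding_morphism[OF et] mX d]
      by simp
    also have "\<dots> = push_token (?aY \<circ> \<sigma>) (canon Y) ` d"
      by (rule push_cong[OF _ d]) (simp add: \<tau>_def inv)
    also have "\<dots> = push_token ?aY (canon Y) ` push_token \<sigma> Y ` d"
      using push_comp[OF Y CY mY order_embedding_morphism[OF em] d] by simp
    also have "\<dots> = rename_m ?aY (push_token \<sigma> Y ` d)"
      by (rule rename_m_canon[OF vc Y down_closed_marking_push[OF Y], symmetric])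
    finally show ?thesis .
  qed
  with et that show ?thesis by blast
qed

lemma pmarking_canon_reflect:
  assumes vc: "valid_canon canon alpha" and X: "is_poset X" and R: "is_poset R"
    and e: "order_embedding \<tau> (canon X) R" and d: "down_closed_marking X d"
    and pm: "pmarking N R (push_token \<tau> R ` rename_m (alpha X) d)"
  shows "pmarking N (canon X) (rename_m (alpha X) d)"
proof -
  have CX: "is_poset (canon X)" using valid_canon_is_poset[OF vc X] .
  then have "down_closed_marking (canon X) (rename_m (alpha X) d)"
    using rename_m_canon[OF vc X d] down_closed_marking_push by metis
  then show ?thesis using pmarking_reflect[OF CX R e _ pm] by blast
qed

lemma cgac_push:
  fixes N :: "('s, 't, 'a) net" and a :: 'a
  assumes vc: "valid_canon canon alpha" and inf: "infinite (UNIV :: 'e set)"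
    and abP: "abstract canon (P :: ('e, 'a) poset)" and abQ: "abstract canon Q"
    and em: "order_embedding \<sigma> P Q" and K: "K \<subseteq> elems P"
  defines "DP \<equiv> delta P K (fresh P) a" and "DQ \<equiv> delta Q (rename \<sigma> K) (fresh Q) a"
  obtains \<tau> where "order_embedding \<tau> (canon DP) (canon DQ)"
    and "\<And>d1 :: ('e, 'a, 's) cmarking. down_closed_marking DP d1 \<Longrightarrow>
      push_token \<tau> (canon DQ) ` rename_m (alpha DP) d1
        = rename_m (alpha DQ) (push_token (\<sigma>(fresh P := fresh Q)) DQ ` d1)"
    and "\<And>d d1. cgc N P d K (fresh P) a DP d1 \<Longrightarrow>
      cgac N canon alpha Q (push_token \<sigma> Q ` d) (rename \<sigma> K) a (canon DQ)
        (push_token \<tau> (canon DQ) ` rename_m (alpha DP) d1)"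
proof -
  have P: "is_poset P" and Q: "is_poset Q" using abP abQ by (simp_all add: abstract_is_poset)
  have fP: "fresh P \<notin> evs P" and fQ: "fresh Q \<notin> evs Q"
    using fresh_notin_evs[OF inf] P Q by blast+
  have DP: "is_poset DP" and DQ: "is_poset DQ"
    unfolding DP_def DQ_def
    using is_poset_delta[OF P fP K] is_poset_delta[OF Q fQ rename_elems[OF order_embedding_morphism[OF em] K]]
    by blast+
  obtain \<tau> where et: "order_embedding \<tau> (canon DP) (canon DQ)"
    and eq: "\<And>d1 :: ('e, 'a, 's) cmarking. down_closed_marking DP d1 \<Longrightarrow>
      push_token \<tau> (canon DQ) ` rename_m (alpha DP) d1
        = rename_m (alpha DQ) (push_token (\<sigma>(fresh P := fresh Q)) DQ ` d1)"
    by (rule canon_transport[OF vc DP DQ order_embedding_delta[OF P Q em fP fQ K, of a, folded DP_def DQ_def]]) blast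
  have step: "cgac N canon alpha Q (push_token \<sigma> Q ` d) (rename \<sigma> K) a (canon DQ)
      (push_token \<tau> (canon DQ) ` rename_m (alpha DP) d1)"
    if st: "cgc N P d K (fresh P) a DP d1" for d d1
    unfolding cgac_iff_cgc[OF vc inf abQ] eq[OF cgc_facts(7)[OF st]]
    using cgc_push(1)[OF P Q em fQ st] DQ_def by blast
  show ?thesis by (rule that[OF et eq step])
qed

lemma cgac_pull:
  fixes N :: "('s, 't, 'a) net"
  assumes vc: "valid_canon canon alpha" and inf: "infinite (UNIV :: 'e set)"
    and abP: "abstract canon (P :: ('e, 'a) poset)" and abQ: "abstract canon Q"
    and em: "order_embedding \<sigma> P Q" and pm: "pmarking N P d"
    and tr: "cgac N canon alpha Q (push_token \<sigma> Q ` d) KQ a T d''"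
  obtains K d1 where "KQ = rename \<sigma> K" and "cgc N P d K (fresh P) a (delta P K (fresh P) a) d1"
    and "T = canon (delta Q KQ (fresh Q) a)"
    and "d'' = rename_m (alpha (delta Q KQ (fresh Q) a))
      (push_token (\<sigma>(fresh P := fresh Q)) (delta Q KQ (fresh Q) a) ` d1)"
proof -
  have P: "is_poset P" and Q: "is_poset Q" using abP abQ by (simp_all add: abstract_is_poset)
  obtain dQ1 where stQ: "cgc N Q (push_token \<sigma> Q ` d) KQ (fresh Q) a (delta Q KQ (fresh Q) a) dQ1"
    and hT: "T = canon (delta Q KQ (fresh Q) a)" and hd: "d'' = rename_m (alpha (delta Q KQ (fresh Q) a)) dQ1"
    using tr unfolding cgac_iff_cgc[OF vc inf abQ] by blast
  obtain K d1 where hK: "KQ = rename \<sigma> K" and st: "cgc N P d K (fresh P) a (delta P K (fresh P) a) d1"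
    and hd1: "dQ1 = push_token (\<sigma>(fresh P := fresh Q)) (delta Q KQ (fresh Q) a) ` d1"
    by (rule cgc_pull[OF P Q em pm fresh_notin_evs[OF inf P] stQ])
  show ?thesis by (rule that[OF hK st hT]) (simp only: hd hd1)
qed

lemma cgac_abstract_target:
  assumes vc: "valid_canon canon alpha" and inf: "infinite (UNIV :: 'e set)"
    and ab: "abstract canon (P :: ('e, 'a) poset)" and tr: "cgac N canon alpha P d K a T d''"
  shows "abstract canon T"
proof -
  obtain d1 where "cgc N P d K (fresh P) a (delta P K (fresh P) a) d1"
    and "T = canon (delta P K (fresh P) a)"
    using tr unfolding cgac_iff_cgc[OF vc inf ab] by blast
  then show ?thesis using abstract_canon[OF vc cgc_facts(6)] by blast
qed

definition pushforward_rel :: "('s, 't, 'a) net \<Rightarrow> (('e, 'a) poset \<Rightarrow> ('e, 'a) poset)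
    \<Rightarrow> (('e, 'a) poset \<Rightarrow> 'e \<Rightarrow> 'e)
    \<Rightarrow> ('e, 'a) poset \<Rightarrow> ('e, 'a, 's) cmarking \<Rightarrow> ('e, 'a, 's) cmarking \<Rightarrow> bool" where
  "pushforward_rel N canon alpha Q x y \<longleftrightarrow> abstract canon Q \<and>
     (\<exists>P \<sigma> c1 c2. abstract canon P \<and> order_embedding \<sigma> P Q \<and> sim_AC N canon alpha P c1 c2
        \<and> x = push_token \<sigma> Q ` c1 \<and> y = push_token \<sigma> Q ` c2)"

definition pullback_rel :: "('s, 't, 'a) net \<Rightarrow> (('e, 'a) poset \<Rightarrow> ('e, 'a) poset)
    \<Rightarrow> (('e, 'a) poset \<Rightarrow> 'e \<Rightarrow> 'e)
    \<Rightarrow> ('e, 'a) poset \<Rightarrow> ('e, 'a, 's) cmarking \<Rightarrow> ('e, 'a, 's) cmarking \<Rightarrow> bool" where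
  "pullback_rel N canon alpha P x y \<longleftrightarrow> abstract canon P \<and> pmarking N P x \<and> pmarking N P y \<and>
     (\<exists>Q \<sigma>. abstract canon Q \<and> order_embedding \<sigma> P Q
        \<and> sim_AC N canon alpha Q (push_token \<sigma> Q ` x) (push_token \<sigma> Q ` y))"

lemma pushforward_rel_step:
  fixes N :: "('s, 't, 'a) net"
  assumes vc: "valid_canon canon alpha" and inf: "infinite (UNIV :: 'e set)"
    and R: "pushforward_rel N canon alpha (Q :: ('e, 'a) poset) x y"
    and tr: "cgac N canon alpha Q x K a T x''"
  shows "\<exists>y''. cgac N canon alpha Q y K a T y'' \<and> pushforward_rel N canon alpha T x'' y''"
proof -
  obtain P \<sigma> c1 c2 where abQ: "abstract canon Q" and abP: "abstract canon P"
    and em: "order_embedding \<sigma> P Q" and sim: "sim_AC N canon alpha P c1 c2"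
    and x: "x = push_token \<sigma> Q ` c1" and y: "y = push_token \<sigma> Q ` c2"
    using R unfolding pushforward_rel_def by blast
  have pm: "pmarking N P c1" using sim_AC_pmarking[OF sim] by blast
  obtain KP d1 where hK: "K = rename \<sigma> KP"
    and st1: "cgc N P c1 KP (fresh P) a (delta P KP (fresh P) a) d1"
    and hT: "T = canon (delta Q K (fresh Q) a)"
    and hx: "x'' = rename_m (alpha (delta Q K (fresh Q) a))
      (push_token (\<sigma>(fresh P := fresh Q)) (delta Q K (fresh Q) a) ` d1)"
    by (rule cgac_pull[OF vc inf abP abQ em pm tr[unfolded x]])
  define DP where "DP = delta P KP (fresh P) a"
  obtain \<tau> where et: "order_embedding \<tau> (canon DP) T"
    and eq: "\<And>d1 :: ('e, 'a, 's) cmarking. down_closed_marking DP d1 \<Longrightarrow> push_token \<tau> T ` rename_m (alpha DP) d1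
      = rename_m (alpha (delta Q K (fresh Q) a)) (push_token (\<sigma>(fresh P := fresh Q)) (delta Q K (fresh Q) a) ` d1)"
    and push: "\<And>d d1. cgc N P d KP (fresh P) a DP d1 \<Longrightarrow>
      cgac N canon alpha Q (push_token \<sigma> Q ` d) K a T (push_token \<tau> T ` rename_m (alpha DP) d1)"
    by (rule cgac_push[where N = N and a = a, OF vc inf abP abQ em cgc_facts(3)[OF st1],
        folded hK, folded hT DP_def]) (rule that)
  have "cgac N canon alpha P c1 KP a (canon DP) (rename_m (alpha DP) d1)"
    unfolding cgac_iff_cgc[OF vc inf abP] using st1 DP_def by blast
  then obtain c2'' where tr2: "cgac N canon alpha P c2 KP a (canon DP) c2''"
    and sim2: "sim_AC N canon alpha (canon DP) (rename_m (alpha DP) d1) c2''"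
    using sim_AC_step[OF sim] by blast
  obtain d2 where st2: "cgc N P c2 KP (fresh P) a DP d2" and hc2: "c2'' = rename_m (alpha DP) d2"
    using tr2[unfolded cgac_iff_cgc[OF vc inf abP]] DP_def by blast
  have "x'' = push_token \<tau> T ` rename_m (alpha DP) d1"
    using hx eq[OF cgc_facts(7)[OF st1[folded DP_def]]] by simp
  then have "pushforward_rel N canon alpha T x'' (push_token \<tau> T ` c2'')"
    unfolding pushforward_rel_def
    using cgac_abstract_target[OF vc inf abQ tr] abstract_canon[OF vc cgc_facts(6)[OF st2]] et sim2
    by blast
  moreover have "cgac N canon alpha Q y K a T (push_token \<tau> T ` c2'')"
    using push[OF st2] y hc2 by simp
  ultimately show ?thesis by blast
qed

lemma pullback_rel_step:
  fixes N :: "('s, 't, 'a) net"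
  assumes vc: "valid_canon canon alpha" and inf: "infinite (UNIV :: 'e set)"
    and R: "pullback_rel N canon alpha (P :: ('e, 'a) poset) x y"
    and tr: "cgac N canon alpha P x K a T x''"
  shows "\<exists>y''. cgac N canon alpha P y K a T y'' \<and> pullback_rel N canon alpha T x'' y''"
proof -
  obtain Q \<sigma> where abP: "abstract canon P" and pmy: "pmarking N P y"
    and abQ: "abstract canon Q" and em: "order_embedding \<sigma> P Q"
    and sim: "sim_AC N canon alpha Q (push_token \<sigma> Q ` x) (push_token \<sigma> Q ` y)"
    using R unfolding pullback_rel_def by blast
  define DP where "DP = delta P K (fresh P) a"
  define DQ where "DQ = delta Q (rename \<sigma> K) (fresh Q) a"
  obtain d1 where st1: "cgc N P x K (fresh P) a DP d1" and hT: "T = canon DP"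
    and hx: "x'' = rename_m (alpha DP) d1"
    using tr[unfolded cgac_iff_cgc[OF vc inf abP]] DP_def by blast
  obtain \<tau> where et: "order_embedding \<tau> (canon DP) (canon DQ)"
    and eq: "\<And>d1 :: ('e, 'a, 's) cmarking. down_closed_marking DP d1 \<Longrightarrow>
      push_token \<tau> (canon DQ) ` rename_m (alpha DP) d1
        = rename_m (alpha DQ) (push_token (\<sigma>(fresh P := fresh Q)) DQ ` d1)"
    and push: "\<And>d d1. cgc N P d K (fresh P) a DP d1 \<Longrightarrow>
      cgac N canon alpha Q (push_token \<sigma> Q ` d) (rename \<sigma> K) a (canon DQ)
        (push_token \<tau> (canon DQ) ` rename_m (alpha DP) d1)"
    by (rule cgac_push[where N = N and a = a, OF vc inf abP abQ em cgc_facts(3)[OF st1],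
        folded DP_def DQ_def]) (rule that)
  obtain yQ where trQ: "cgac N canon alpha Q (push_token \<sigma> Q ` y) (rename \<sigma> K) a (canon DQ) yQ"
    and simQ: "sim_AC N canon alpha (canon DQ) (push_token \<tau> (canon DQ) ` x'') yQ"
    using sim_AC_step[OF sim push[OF st1]] hx by blast
  obtain K2 d2 where "rename \<sigma> K = rename \<sigma> K2"
    and st2: "cgc N P y K2 (fresh P) a (delta P K2 (fresh P) a) d2"
    and hyQ: "yQ = rename_m (alpha DQ) (push_token (\<sigma>(fresh P := fresh Q)) DQ ` d2)"
    using cgac_pull[OF vc inf abP abQ em pmy trQ, folded DQ_def] by blast
  then have "K2 = K"
    using rename_inject[OF _ _ em cgc_facts(3)[OF st2] cgc_facts(3)[OF st1]] abP abQ
    by (simp add: abstract_is_poset)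
  then have st2': "cgc N P y K (fresh P) a DP d2" using st2 DP_def by simp
  define y'' where "y'' = rename_m (alpha DP) d2"
  have y': "yQ = push_token \<tau> (canon DQ) ` y''"
    using hyQ eq[OF cgc_facts(7)[OF st2']] y''_def by simp
  have "pmarking N T x''" "pmarking N T y''"
    using pmarking_canon_reflect[OF vc cgc_facts(6)[OF st1] _ et] cgc_facts(7)[OF st1] cgc_facts(7)[OF st2']
      abstract_is_poset[OF cgac_abstract_target[OF vc inf abQ trQ]] sim_AC_pmarking[OF simQ]
      hx y' y''_def hT by auto
  then have "pullback_rel N canon alpha T x'' y''"
    unfolding pullback_rel_def
    using cgac_abstract_target[OF vc inf abP tr] cgac_abstract_target[OF vc inf abQ trQ] et simQ y' hT
    by blast
  moreover have "cgac N canon alpha P y K a T y''"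
    unfolding cgac_iff_cgc[OF vc inf abP] using st2' hT y''_def DP_def by blast
  ultimately show ?thesis by blast
qed

lemma abs_causal_bisim_pushforward_rel:
  assumes "valid_canon canon alpha" and "infinite (UNIV :: 'e set)"
  shows "abs_causal_bisim N canon alpha (pushforward_rel N canon alpha :: ('e, 'a) poset \<Rightarrow> _)"
proof (rule abs_causal_bisim_symI)
  fix Q :: "('e, 'a) poset" and x y
  assume R: "pushforward_rel N canon alpha Q x y"
  then show "pushforward_rel N canon alpha Q y x"
    unfolding pushforward_rel_def using sim_AC_sym by blast
  show "abstract canon Q \<and> pmarking N Q x \<and> pmarking N Q y"
    using R sim_AC_pmarking pmarking_push abstract_is_poset unfolding pushforward_rel_def by metis
qed (rule pushforward_rel_step[OF assms])

lemma abs_causal_bisim_pullback_rel: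
  assumes "valid_canon canon alpha" and "infinite (UNIV :: 'e set)"
  shows "abs_causal_bisim N canon alpha (pullback_rel N canon alpha :: ('e, 'a) poset \<Rightarrow> _)"
proof (rule abs_causal_bisim_symI)
  show "pullback_rel N canon alpha P y x" if "pullback_rel N canon alpha P x y" for P x y
    using that sim_AC_sym unfolding pullback_rel_def by blast
  show "abstract canon P \<and> pmarking N P x \<and> pmarking N P y"
    if "pullback_rel N canon alpha P x y" for P x y
    using that unfolding pullback_rel_def by blast
qed (rule pullback_rel_step[OF assms])

theorem theorem2:
  fixes N :: "('s, 't, 'a) net"
    and canon :: "('e, 'a) poset \<Rightarrow> ('e, 'a) poset"
    and alpha :: "('e, 'a) poset \<Rightarrow> 'e \<Rightarrow> 'e"
    and P Q :: "('e, 'a) poset"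
    and \<sigma> :: "'e \<Rightarrow> 'e"
    and c c' :: "('e, 'a, 's) cmarking"
  assumes "is_net N"
    and "infinite (UNIV :: 'e set)"
    and "valid_canon canon alpha"
    and "abstract canon P" and "abstract canon Q"
    and "order_embedding \<sigma> P Q"
    and "causal_marking N c" and "causal_marking N c'"
    and "pmarking N P c" and "pmarking N P c'"
  shows "sim_AC N canon alpha P c c' \<longleftrightarrow>
         sim_AC N canon alpha Q (down_m Q (rename_m \<sigma> c)) (down_m Q (rename_m \<sigma> c'))"
  unfolding down_m_rename_m
proof
  assume "sim_AC N canon alpha P c c'"
  then show "sim_AC N canon alpha Q (push_token \<sigma> Q ` c) (push_token \<sigma> Q ` c')"
    using sim_AC_coinduct[OF abs_causal_bisim_pushforward_rel[OF assms(3,2)]] assms(4-6)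
    unfolding pushforward_rel_def by blast
next
  assume "sim_AC N canon alpha Q (push_token \<sigma> Q ` c) (push_token \<sigma> Q ` c')"
  then show "sim_AC N canon alpha P c c'"
    using sim_AC_coinduct[OF abs_causal_bisim_pullback_rel[OF assms(3,2)]] assms(4-6,9,10)
    unfolding pullback_rel_def by blast
qed

end
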